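(* Let $\sigma_n(s):=-H_n\!\left(-\frac{s}{n^2}\right)$, and suppose that, as $n\to\infty$ with $s$ fixed (so $t=-s/n^2\to0$), $\sigma_n(s)$ together with its first and second derivatives in $s$ converge to a twice differentiable function $\sigma(s)$ and its derivatives. Then $\sigma$ satisfies the Jimbo–Miwa–Okamoto $\sigma$-form of Painlevé III $$(s\sigma''(s))^2=4\sigma'(s)(\sigma'(s)-1)(\sigma(s)-s\sigma'(s))+(\nu_1\sigma'(s)-\nu_2)^2,\qquad \nu_1=\alpha+\gamma,\ \nu_2=\gamma.$$
   Context: Fix $\alpha,\beta,\gamma>0$ and real constants $A,B$ with $A\ge0$, $A+B\ge0$, not both $A$ and $A+B$ equal to $0$. Let $\theta$ be the Heaviside function. For $t$ put $w(x,t)=x^{\alpha}(1-x)^{\beta}|x-t|^{\gamma}(A+B\theta(x-t))$ on $[0,1]$, let $D_n(t)=\det\left(\int_0^1x^{i+j}w(x,t)dx\right)_{i,j=0}^{n-1}$, and $H_n(t)=t(t-1)\frac{d}{dt}\ln D_n(t)$; $H_n$ satisfies the second-order ODE (in $t$) $t^2(t-1)^2(H_n'')^2+4t(t-1)(H_n')^3-\{4(2t-1)H_n+[4n^2+4n(\alpha+\beta+\gamma)+(\alpha+\beta)^2]t^2-2[2n^2+2n(\alpha+\beta+\gamma)+\alpha(\alpha+\gamma)+\beta(\alpha-\gamma)]t+(\alpha+\gamma)^2\}(H_n')^2+2\{2H_n^2+[(4n^2+4n(\alpha+\beta+\gamma)+(\alpha+\beta)^2)t-2n^2-2n(\alpha+\beta+\gamma)-\alpha(\alpha+\gamma)-\beta(\alpha-\gamma)]H_n-n\gamma(n+\alpha+\beta+\gamma)[(\alpha-\beta)t-\alpha-\gamma]\}H_n'-[4n^2+4n(\alpha+\beta+\gamma)+(\alpha+\beta)^2]H_n^2+2n\gamma(\alpha-\beta)(n+\alpha+\beta+\gamma)H_n-n^2\gamma^2(n+\alpha+\beta+\gamma)^2=0$,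 and the theorem concerns the double-scaling limit of this equation. *)

theory Defs
  imports "HOL-Analysis.Analysis"
begin

text \<open>Left-hand side of the second-order ODE satisfied by H_n(t), written with
  h = H_n(t), h1 = H_n'(t), h2 = H_n''(t) and N = n.\<close>
definition ode_lhs :: "real \<Rightarrow> real \<Rightarrow> real \<Rightarrow> real \<Rightarrow> real \<Rightarrow> real \<Rightarrow> real \<Rightarrow> real \<Rightarrow> real" where
  "ode_lhs N \<alpha> \<beta> \<gamma> t h h1 h2 =
     t^2 * (t - 1)^2 * h2^2 + 4 * t * (t - 1) * h1^3
   - (4 * (2*t - 1) * h
      + (4*N^2 + 4*N*(\<alpha>+\<beta>+\<gamma>) + (\<alpha>+\<beta>)^2) * t^2
      - 2 * (2*N^2 + 2*N*(\<alpha>+\<beta>+\<gamma>) + \<alpha>*(\<alpha>+\<gamma>) + \<beta>*(\<alpha>-\<gamma>)) * t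
      + (\<alpha>+\<gamma>)^2) * h1^2
   + 2 * (2 * h^2
      + ((4*N^2 + 4*N*(\<alpha>+\<beta>+\<gamma>) + (\<alpha>+\<beta>)^2) * t
         - 2*N^2 - 2*N*(\<alpha>+\<beta>+\<gamma>) - \<alpha>*(\<alpha>+\<gamma>) - \<beta>*(\<alpha>-\<gamma>)) * h
      - N * \<gamma> * (N+\<alpha>+\<beta>+\<gamma>) * ((\<alpha>-\<beta>) * t - \<alpha> - \<gamma>)) * h1
   - (4*N^2 + 4*N*(\<alpha>+\<beta>+\<gamma>) + (\<alpha>+\<beta>)^2) * h^2
   + 2 * N * \<gamma> * (\<alpha>-\<beta>) * (N+\<alpha>+\<beta>+\<gamma>) * h
   - N^2 * \<gamma>^2 * (N+\<alpha>+\<beta>+\<gamma>)^2"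

definition sigma_n :: "(nat \<Rightarrow> real \<Rightarrow> real) \<Rightarrow> nat \<Rightarrow> real \<Rightarrow> real" where
  "sigma_n H n s = - H n (- s / (real n)^2)"

end

theory Submission
  imports Defs
begin

text \<open>Substituting \<open>t = -s/n\<^sup>2\<close>, \<open>H\<^sub>n = -\<sigma>\<^sub>n\<close>, \<open>H\<^sub>n' = n\<^sup>2 \<sigma>\<^sub>n'\<close>, \<open>H\<^sub>n'' = -n\<^sup>4 \<sigma>\<^sub>n''\<close> into the ODE
  and multiplying by \<open>n\<^sup>-\<^sup>4\<close> gives a polynomial identity in \<open>x = 1/n\<close> whose coefficients stay
  bounded. Since \<open>\<sigma>\<^sub>n\<close> and its first two derivatives converge, the identity passes to the limit
  \<open>x \<rightarrow> 0\<close>, where it is exactly the \<open>\<sigma>\<close>-form of Painlev\'e III.\<close>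

definition ode_scaled :: "real \<Rightarrow> real \<Rightarrow> real \<Rightarrow> real \<Rightarrow> real \<Rightarrow> real \<Rightarrow> real \<Rightarrow> real \<Rightarrow> real" where
  "ode_scaled \<alpha> \<beta> \<gamma> s x a b c =
    (let k = 4 + 4*(\<alpha>+\<beta>+\<gamma>)*x + (\<alpha>+\<beta>)^2*x^2;
         l = 2 + 2*(\<alpha>+\<beta>+\<gamma>)*x + (\<alpha>*(\<alpha>+\<gamma>) + \<beta>*(\<alpha>-\<gamma>))*x^2;
         q = \<gamma>*(1 + (\<alpha>+\<beta>+\<gamma>)*x)
     in s^2*(1+s*x^2)^2*c^2 + 4* s*(1+s*x^2)*b^3
        - (4*a*(1+2* s*x^2) + k* s^2*x^2 + 2*l* s + (\<alpha>+\<gamma>)^2)*b^2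
        + 2*(2*a^2*x^2 + a*(k* s*x^2+l) + q*((\<alpha>-\<beta>)* s*x^2 + \<alpha> + \<gamma>))*b
        - k*x^2*a^2 - 2*(\<alpha>-\<beta>)*q*x^2*a - q^2)"

lemma ode_lhs_rescale:
  assumes "N * x = 1"
  shows "x^4 * ode_lhs N \<alpha> \<beta> \<gamma> (-s*x^2) (-a) (N^2*b) (-(N^4*c)) = ode_scaled \<alpha> \<beta> \<gamma> s x a b c"
  using assms unfolding ode_lhs_def ode_scaled_def Let_def by algebra

lemma ode_scaled_at_zero:
  "ode_scaled \<alpha> \<beta> \<gamma> s 0 a b c =
     (s*c)^2 - (4*b*(b-1)*(a - s*b) + ((\<alpha>+\<gamma>)*b - \<gamma>)^2)"
  unfolding ode_scaled_def Let_def by (simp add: algebra_simps power2_eq_square power3_eq_cube)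

lemma tendsto_ode_scaled:
  assumes "(x \<longlongrightarrow> x0) F" "(a \<longlongrightarrow> a0) F" "(b \<longlongrightarrow> b0) F" "(c \<longlongrightarrow> c0) F"
  shows "((\<lambda>n. ode_scaled \<alpha> \<beta> \<gamma> s (x n) (a n) (b n) (c n))
           \<longlongrightarrow> ode_scaled \<alpha> \<beta> \<gamma> s x0 a0 b0 c0) F"
  unfolding ode_scaled_def Let_def by (intro tendsto_intros assms)

lemma DERIV_scale_compose:
  fixes f :: "real \<Rightarrow> real"
  assumes "f differentiable at (k * u)"
  shows "((\<lambda>v. c * f (k * v)) has_real_derivative c * k * deriv f (k * u)) (at u)"
proof -
  have "(f has_real_derivative deriv f (k * u)) (at (k * u))"
    using assms by (simp add: DERIV_deriv_iff_real_differentiable)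
  from DERIV_cmult[OF DERIV_chain2[OF this DERIV_cmult_Id[of k u]], of c] show ?thesis
    by (simp add: ac_simps)
qed

lemma deriv2_scale_compose:
  fixes f :: "real \<Rightarrow> real"
  assumes "\<forall>\<^sub>F v in nhds u. f differentiable at (k * v)"
    and "deriv f differentiable at (k * u)"
  shows "deriv (deriv (\<lambda>v. c * f (k * v))) u = c * k^2 * deriv (deriv f) (k * u)"
proof -
  have "\<forall>\<^sub>F v in nhds u. deriv (\<lambda>v. c * f (k * v)) v = (c * k) * deriv f (k * v)"
    using assms(1) by eventually_elim (rule DERIV_imp_deriv[OF DERIV_scale_compose])
  then have "deriv (deriv (\<lambda>v. c * f (k * v))) u = deriv (\<lambda>v. (c * k) * deriv f (k * v)) u"
    by (rule deriv_cong_ev) simp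
  also have "\<dots> = c * k * k * deriv (deriv f) (k * u)"
    by (rule DERIV_imp_deriv[OF DERIV_scale_compose[OF assms(2)]])
  finally show ?thesis by (simp add: power2_eq_square mult.assoc)
qed

lemma sigma_n_eq_scale_compose:
  "sigma_n H n = (\<lambda>v. (-1) * H n ((-1/(real n)^2) * v))"
  by (simp add: sigma_n_def fun_eq_iff)

lemma ode_scaled_sigma_n:
  fixes H :: "nat \<Rightarrow> real \<Rightarrow> real"
  assumes H_diff: "\<And>t. t \<noteq> 0 \<Longrightarrow> t \<noteq> 1 \<Longrightarrow> H n differentiable at t \<and> deriv (H n) differentiable at t"
    and H_ode: "\<And>t. t \<noteq> 0 \<Longrightarrow> t \<noteq> 1 \<Longrightarrow>
                  ode_lhs (real n) \<alpha> \<beta> \<gamma> t (H n t) (deriv (H n) t) (deriv (deriv (H n)) t) = 0"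
    and n: "n \<ge> 1" and s: "s \<noteq> 0" "s \<noteq> - ((real n)^2)"
  shows "ode_scaled \<alpha> \<beta> \<gamma> s (1 / real n)
           (sigma_n H n s) (deriv (sigma_n H n) s) (deriv (deriv (sigma_n H n)) s) = 0"
proof -
  define k where "k = -1 / (real n)^2"
  define t where "t = k * s"
  have n2: "(real n)^2 > 0" using n by simp
  have t: "t \<noteq> 0" "t \<noteq> 1"
    using s n2 by (auto simp: t_def k_def field_simps)
  have "((\<lambda>v. k * v) \<longlongrightarrow> t) (nhds s)"
    unfolding t_def by (intro tendsto_intros filterlim_ident)
  then have "\<forall>\<^sub>F v in nhds s. k * v \<noteq> 0 \<and> k * v \<noteq> 1"
    using t tendsto_imp_eventually_ne eventually_conj by metis
  then have near: "\<forall>\<^sub>F v in nhds s. H n differentiable at (k * v)"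
    by eventually_elim (use H_diff in blast)
  have sigma: "sigma_n H n s = - H n t"
    by (simp add: sigma_n_def t_def k_def)
  have sigma1: "deriv (sigma_n H n) s = - k * deriv (H n) t"
    unfolding sigma_n_eq_scale_compose k_def[symmetric] t_def
    using DERIV_imp_deriv[OF DERIV_scale_compose[of "H n" k s "-1"]] H_diff[OF t] t_def by simp
  have sigma2: "deriv (deriv (sigma_n H n)) s = - (k^2) * deriv (deriv (H n)) t"
    unfolding sigma_n_eq_scale_compose k_def[symmetric] t_def
    using deriv2_scale_compose[OF near, of "-1"] H_diff[OF t] t_def by simp
  have "ode_lhs (real n) \<alpha> \<beta> \<gamma> (-s*(1/real n)^2) (-(sigma_n H n s))
          ((real n)^2 * deriv (sigma_n H n) s) (-((real n)^4 * deriv (deriv (sigma_n H n)) s))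
        = ode_lhs (real n) \<alpha> \<beta> \<gamma> t (H n t) (deriv (H n) t) (deriv (deriv (H n)) t)"
  proof -
    have "(real n)^4 = (real n)^2 * (real n)^2" by algebra
    then show ?thesis
      using n2 by (simp add: sigma sigma1 sigma2 t_def k_def power_divide)
  qed
  also have "\<dots> = 0" using H_ode[OF t] .
  finally have "ode_lhs (real n) \<alpha> \<beta> \<gamma> (-s*(1/real n)^2) (-(sigma_n H n s))
      ((real n)^2 * deriv (sigma_n H n) s) (-((real n)^4 * deriv (deriv (sigma_n H n)) s)) = 0" .
  moreover have "real n * (1 / real n) = 1" using n by simp
  ultimately show ?thesis
    using ode_lhs_rescale by (metis mult_zero_right)
qed

theorem theorem4p1:
  fixes \<alpha> \<beta> \<gamma> A B :: real
    and H :: "nat \<Rightarrow> real \<Rightarrow> real"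
    and \<sigma> :: "real \<Rightarrow> real"
    and s :: real
  assumes par: "\<alpha> > 0" "\<beta> > 0" "\<gamma> > 0" "A \<ge> 0" "A + B \<ge> 0" "\<not> (A = 0 \<and> A + B = 0)"
    and H_diff: "\<And>n t. n \<ge> 1 \<Longrightarrow> t \<noteq> 0 \<Longrightarrow> t \<noteq> 1 \<Longrightarrow>
                    H n differentiable at t \<and> deriv (H n) differentiable at t"
    and H_ode: "\<And>n t. n \<ge> 1 \<Longrightarrow> t \<noteq> 0 \<Longrightarrow> t \<noteq> 1 \<Longrightarrow>
                    ode_lhs (real n) \<alpha> \<beta> \<gamma> t (H n t) (deriv (H n) t) (deriv (deriv (H n)) t) = 0"
    and s_ne: "s \<noteq> 0"
    and sigma_diff: "\<forall>\<^sub>F u in nhds s. \<sigma> differentiable at u"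
    and sigma_diff2: "deriv \<sigma> differentiable at s"
    and lim0: "(\<lambda>n. sigma_n H n s) \<longlonglongrightarrow> \<sigma> s"
    and lim1: "(\<lambda>n. deriv (sigma_n H n) s) \<longlonglongrightarrow> deriv \<sigma> s"
    and lim2: "(\<lambda>n. deriv (deriv (sigma_n H n)) s) \<longlonglongrightarrow> deriv (deriv \<sigma>) s"
  shows "(s * deriv (deriv \<sigma>) s)^2
           = 4 * deriv \<sigma> s * (deriv \<sigma> s - 1) * (\<sigma> s - s * deriv \<sigma> s)
             + ((\<alpha> + \<gamma>) * deriv \<sigma> s - \<gamma>)^2"
proof -
  let ?P = "\<lambda>n. ode_scaled \<alpha> \<beta> \<gamma> s (1 / real n)
              (sigma_n H n s) (deriv (sigma_n H n) s) (deriv (deriv (sigma_n H n)) s)"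
  have "\<forall>\<^sub>F n in sequentially. real n > \<bar>s\<bar>"
    by (rule filterlim_real_sequentially[unfolded filterlim_at_top_dense, rule_format])
  moreover have "\<forall>\<^sub>F n in sequentially. n \<ge> 1"
    by (rule eventually_ge_at_top)
  ultimately have "\<forall>\<^sub>F n in sequentially. ?P n = 0"
  proof eventually_elim
    case (elim n)
    then have "real n \<le> (real n)^2" by (simp add: power2_eq_square)
    with elim have "s \<noteq> - ((real n)^2)" by linarith
    with elim show ?case
      using ode_scaled_sigma_n[of H n, OF H_diff H_ode] s_ne by blast
  qed
  then have "?P \<longlonglongrightarrow> 0"
    by (rule tendsto_eventually)
  moreover have "?P \<longlonglongrightarrow> ode_scaled \<alpha> \<beta> \<gamma> s 0 (\<sigma> s) (deriv \<sigma> s) (deriv (deriv \<sigma>) s)"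
    using lim_inverse_n lim0 lim1 lim2
    by (intro tendsto_ode_scaled) (simp_all add: inverse_eq_divide)
  ultimately have "ode_scaled \<alpha> \<beta> \<gamma> s 0 (\<sigma> s) (deriv \<sigma> s) (deriv (deriv \<sigma>) s) = 0"
    using LIMSEQ_unique by blast
  then show ?thesis
    by (simp add: ode_scaled_at_zero)
qed

end
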